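(* Let $K$ be a hexagonal trefoil knot with vertices $v_1,\dots,v_6$ and let $\hat K$ be its quadrisecant approximation. If $\hat K$ has a new quadrisecant of type-1 or type-2, then this quadrisecant lies in at least one of the planes $P_1,\dots,P_6$.
   Context: A knot is a locally flat simple closed curve in $\mathbb R^3$; a polygonal knot is a union of finitely many straight segments, whose maximal segments are edges. A hexagonal trefoil knot is a polygonal knot with exactly six edges having the knot type of the trefoil. Label its vertices cyclically $v_1,\dots,v_6$ (indices mod 6), with edges $e_{i\,i+1}=\overline{v_iv_{i+1}}$, and let $P_i$ be the plane through $v_{i-1},v_i,v_{i+1}$. A quadrisecant of a knot or closed polygonal curve $C$ is a straight line $L$ such that $C\cap L$ has at least four connected components. The quadrisecant approximation $\hat K$ is obtained by marking all intersection points of $K$ with its (finitely many) quadrisecants and replacing each subarc of $K$ between consecutive marked points by the straight segment joining them. Each edge $e_{i\,i+1}$ contains exactly two marked points, and $\hat K$ has twelve edges: $O_i$, the segment of $e_{i\,i+1}$ between its two marked points, and $N_i$, the segment joining $O_{i-1}$ and $O_i$ (joining the marked point of $e_{i-1\,i}$ nearest $v_i$ to the marked point of $e_{i\,i+1}$ nearest $v_i$). A new quadrisecant of $\hat K$ is a quadrisecant of $\hat K$ that is not a quadrisecant of $K$. A quadrisecant $L$ of $\hat K$ is of type-$k$ if there are four distinct points of $L\cap\hat K$ lying on four distinct edges of $\hat K$ such that exactly $k$ pairs among these four edges are adjacent (share a vertex); a quadrisecant through vertices may have more than one type. *)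

theory Defs
  imports "HOL-Analysis.Analysis"
begin

definition ambient_isotopic :: "(real^3) set \<Rightarrow> (real^3) set \<Rightarrow> bool" where
  "ambient_isotopic A B \<longleftrightarrow>
     (\<exists>H :: (real, real^3) prod \<Rightarrow> real^3.
        continuous_on ({0..1} \<times> UNIV) H \<and>
        (\<forall>t\<in>{0..1}. \<exists>g. homeomorphism UNIV UNIV (\<lambda>x. H (t, x)) g) \<and>
        (\<forall>x. H (0, x) = x) \<and>
        (\<lambda>x. H (1, x)) ` A = B)"

definition std_trefoil :: "(real^3) set" where
  "std_trefoil = (\<lambda>t. vector [sin t + 2 * sin (2 * t), cos t - 2 * cos (2 * t), - sin (3 * t)])
                    ` {0..2 * pi}"

definition mirror3 :: "real^3 \<Rightarrow> real^3" where
  "mirror3 x = vector [x $ 1, x $ 2, - (x $ 3)]"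

definition is_trefoil :: "(real^3) set \<Rightarrow> bool" where
  "is_trefoil K \<longleftrightarrow> ambient_isotopic K std_trefoil \<or> ambient_isotopic K (mirror3 ` std_trefoil)"

definition edge6 :: "(nat \<Rightarrow> real^3) \<Rightarrow> nat \<Rightarrow> (real^3) set" where
  "edge6 v i = closed_segment (v (i mod 6)) (v (Suc i mod 6))"

definition polygon6 :: "(nat \<Rightarrow> real^3) \<Rightarrow> (real^3) set" where
  "polygon6 v = (\<Union>i<6. edge6 v i)"

text \<open>Simple closed hexagon whose six segments are maximal (consecutive vertices
never collinear), i.e. a polygonal knot with exactly six edges.\<close>
definition hexagonal_knot :: "(nat \<Rightarrow> real^3) \<Rightarrow> bool" where
  "hexagonal_knot v \<longleftrightarrow>
     (\<forall>i<6. \<not> collinear {v ((i + 5) mod 6), v i, v (Suc i mod 6)}) \<and>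
     (\<forall>i<6. edge6 v i \<inter> edge6 v (Suc i) = {v (Suc i mod 6)}) \<and>
     (\<forall>i<6. \<forall>j<6. i \<noteq> j \<and> j \<noteq> Suc i mod 6 \<and> i \<noteq> Suc j mod 6 \<longrightarrow>
                    edge6 v i \<inter> edge6 v j = {})"

definition hexagonal_trefoil :: "(nat \<Rightarrow> real^3) \<Rightarrow> bool" where
  "hexagonal_trefoil v \<longleftrightarrow> hexagonal_knot v \<and> is_trefoil (polygon6 v)"

definition plane6 :: "(nat \<Rightarrow> real^3) \<Rightarrow> nat \<Rightarrow> (real^3) set" where
  "plane6 v i = affine hull {v ((i + 5) mod 6), v i, v (Suc i mod 6)}"

definition is_line :: "(real^3) set \<Rightarrow> bool" where
  "is_line L \<longleftrightarrow> (\<exists>p d. d \<noteq> 0 \<and> L = range (\<lambda>t::real. p + t *\<^sub>R d))"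

definition quadrisecant :: "(real^3) set \<Rightarrow> (real^3) set \<Rightarrow> bool" where
  "quadrisecant C L \<longleftrightarrow> is_line L \<and> (\<exists>F. F \<subseteq> components (C \<inter> L) \<and> card F = 4)"

definition marked_points :: "(real^3) set \<Rightarrow> (real^3) set" where
  "marked_points K = K \<inter> \<Union>{L. quadrisecant K L}"

text \<open>a i, b i: the two marked points on edge e_{i,i+1}, a i nearest v i.
Vertices of the approximation in cyclic order: a 0, b 0, a 1, b 1, ..., a 5, b 5.
Edge 2i is O_i = [a i, b i], edge 2i+1 is N_(i+1) = [b i, a (i+1)].\<close>
definition qa_vertex :: "(nat \<Rightarrow> real^3) \<Rightarrow> (nat \<Rightarrow> real^3) \<Rightarrow> nat \<Rightarrow> real^3" where
  "qa_vertex a b j = (if even (j mod 12) then a ((j mod 12) div 2) else b ((j mod 12) div 2))"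

definition qa_edge :: "(nat \<Rightarrow> real^3) \<Rightarrow> (nat \<Rightarrow> real^3) \<Rightarrow> nat \<Rightarrow> (real^3) set" where
  "qa_edge a b j = closed_segment (qa_vertex a b j) (qa_vertex a b (Suc j))"

definition qa_approx :: "(nat \<Rightarrow> real^3) \<Rightarrow> (nat \<Rightarrow> real^3) \<Rightarrow> (real^3) set" where
  "qa_approx a b = (\<Union>j<12. qa_edge a b j)"

definition qa_adjacent :: "(nat \<Rightarrow> real^3) \<Rightarrow> (nat \<Rightarrow> real^3) \<Rightarrow> nat \<Rightarrow> nat \<Rightarrow> bool" where
  "qa_adjacent a b j j' \<longleftrightarrow>
     {qa_vertex a b j, qa_vertex a b (Suc j)} \<inter> {qa_vertex a b j', qa_vertex a b (Suc j')} \<noteq> {}"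

definition qa_type :: "nat \<Rightarrow> (nat \<Rightarrow> real^3) \<Rightarrow> (nat \<Rightarrow> real^3) \<Rightarrow> (real^3) set \<Rightarrow> bool" where
  "qa_type k a b L \<longleftrightarrow> quadrisecant (qa_approx a b) L \<and>
     (\<exists>J p. J \<subseteq> {..<12} \<and> card J = 4 \<and> inj_on p J \<and>
        (\<forall>j\<in>J. p j \<in> L \<inter> qa_edge a b j) \<and>
        card {{j, j'} | j j'. j \<in> J \<and> j' \<in> J \<and> j \<noteq> j' \<and> qa_adjacent a b j j'} = k)"

end

theory Submission
  imports Defs
begin

text \<open>Each edge of the approximation lies in a plane \<open>P\<^sub>i\<close>: \<open>O\<^sub>i\<close> lies on \<open>e\<^sub>i\<^sub>,\<^sub>i\<^sub>+\<^sub>1\<close>, which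
lies in \<open>P\<^sub>i\<close> and \<open>P\<^sub>i\<^sub>+\<^sub>1\<close>, and \<open>N\<^sub>i\<close> joins points of \<open>e\<^sub>i\<^sub>-\<^sub>1\<^sub>,\<^sub>i\<close> and \<open>e\<^sub>i\<^sub>,\<^sub>i\<^sub>+\<^sub>1\<close>, both in \<open>P\<^sub>i\<close>.
Labelling every vertex of the approximation by the vertex \<open>v\<^sub>i\<close> of the hexagon nearest to it,
each edge lies in the plane \<open>P\<^sub>i\<close> of either of its endpoint labels, and two vertices of the
approximation can only coincide (at some \<open>v\<^sub>i\<close>) if they carry the same label. Hence two
adjacent edges lie in a common plane \<open>P\<^sub>i\<close>. A quadrisecant of type 1 or 2 meets some pair of
adjacent edges in two distinct points, so it lies in that plane.\<close>

lemma line_subset_affine: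
  assumes "is_line L" "x \<in> L" "y \<in> L" "x \<noteq> y" "affine S" "x \<in> S" "y \<in> S"
  shows "L \<subseteq> S"
proof
  fix z assume z: "z \<in> L"
  obtain p d where L: "L = range (\<lambda>t::real. p + t *\<^sub>R d)" using assms(1) is_line_def by auto
  obtain s u t where xs: "x = p + s *\<^sub>R d" and yu: "y = p + u *\<^sub>R d" and zt: "z = p + t *\<^sub>R d"
    using assms(2,3) z L by auto
  have su: "u - s \<noteq> 0" using assms(4) xs yu by auto
  define l where "l = (t - s) / (u - s)"
  have "(1 - l) *\<^sub>R x + l *\<^sub>R y = p + (s + l * (u - s)) *\<^sub>R d"
    unfolding xs yu by (simp add: algebra_simps)
  also have "s + l * (u - s) = t" using su by (simp add: l_def)
  finally have "z = (1 - l) *\<^sub>R x + l *\<^sub>R y" using zt by simp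
  thus "z \<in> S" using assms(5-7) unfolding affine_def by auto
qed

lemma edge6_subset_plane6:
  assumes "i < 6"
  shows "edge6 v i \<subseteq> plane6 v i" "edge6 v i \<subseteq> plane6 v (Suc i mod 6)"
proof -
  have prev: "(Suc i mod 6 + 5) mod 6 = i" using assms by presburger
  show "edge6 v i \<subseteq> plane6 v i" "edge6 v i \<subseteq> plane6 v (Suc i mod 6)"
    using assms unfolding edge6_def plane6_def prev by (simp_all add: closed_segment_subset hull_inc)
qed

lemma edge6_Suc_mod: "edge6 v (Suc i mod 6) = edge6 v (Suc i)"
  by (simp add: edge6_def mod_Suc_eq)

text \<open>Vertex \<open>m\<close> of the approximation is \<open>a\<^sub>i\<close> or \<open>b\<^sub>i\<close> with \<open>i = (m mod 12) div 2\<close>; its label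
is \<open>i\<close> for \<open>a\<^sub>i\<close> and \<open>i + 1\<close> for \<open>b\<^sub>i\<close>.\<close>
definition qa_label :: "nat \<Rightarrow> nat" where
  "qa_label m = Suc (m mod 12) div 2 mod 6"

lemma less12_cases:
  "k < (12::nat) \<Longrightarrow> k = 0 \<or> k = 1 \<or> k = 2 \<or> k = 3 \<or> k = 4 \<or> k = 5 \<or> k = 6 \<or> k = 7 \<or>
     k = 8 \<or> k = 9 \<or> k = 10 \<or> k = 11"
  by arith

lemma qa_label_simps:
  "qa_label m = (if even (m mod 12) then m mod 12 div 2 else Suc (m mod 12 div 2) mod 6)"
  "qa_label m = Suc m mod 12 div 2"
  "qa_label (Suc m) = Suc (m mod 12 div 2) mod 6"
proof -
  have "Suc k div 2 mod 6 = (if even k then k div 2 else Suc (k div 2) mod 6) \<and>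
        Suc k div 2 mod 6 = Suc k mod 12 div 2 \<and> Suc (Suc k mod 12) div 2 mod 6 = Suc (k div 2) mod 6"
    if "k < 12" for k :: nat
    using that by (auto dest!: less12_cases)
  moreover have "m mod 12 < 12" "Suc (m mod 12) mod 12 = Suc m mod 12"
    by (simp_all add: mod_Suc_eq)
  ultimately show
    "qa_label m = (if even (m mod 12) then m mod 12 div 2 else Suc (m mod 12 div 2) mod 6)"
    "qa_label m = Suc m mod 12 div 2"
    "qa_label (Suc m) = Suc (m mod 12 div 2) mod 6"
    unfolding qa_label_def by metis+
qed

definition qa_points_on_edges :: "(nat \<Rightarrow> real^3) \<Rightarrow> (nat \<Rightarrow> real^3) \<Rightarrow> (nat \<Rightarrow> real^3) \<Rightarrow> bool" where
  "qa_points_on_edges v a b \<longleftrightarrow> (\<forall>i<6. a i \<in> edge6 v i \<and> b i \<in> edge6 v i)"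

lemma qa_vertex_in_edge6:
  assumes "qa_points_on_edges v a b"
  shows "qa_vertex a b m \<in> edge6 v (m mod 12 div 2)"
  using assms unfolding qa_points_on_edges_def qa_vertex_def by simp

lemma qa_vertex_in_plane6:
  assumes "qa_points_on_edges v a b"
  shows "qa_vertex a b m \<in> plane6 v (m mod 12 div 2)"
    and "qa_vertex a b m \<in> plane6 v (Suc (m mod 12 div 2) mod 6)"
proof -
  have "m mod 12 div 2 < 6" by simp
  then show "qa_vertex a b m \<in> plane6 v (m mod 12 div 2)"
    and "qa_vertex a b m \<in> plane6 v (Suc (m mod 12 div 2) mod 6)"
    using qa_vertex_in_edge6[OF assms, of m] edge6_subset_plane6[of "m mod 12 div 2" v] by blast+
qed

lemma qa_edge_subset_plane6:
  assumes "qa_points_on_edges v a b" and "n \<in> {j, Suc j}"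
  shows "qa_edge a b j \<subseteq> plane6 v (qa_label n)"
proof -
  have "qa_vertex a b j \<in> plane6 v (qa_label n)"
    using assms qa_vertex_in_plane6[OF assms(1), of j] qa_label_simps(1,3)[of j]
    by (auto split: if_splits)
  moreover have "qa_vertex a b (Suc j) \<in> plane6 v (qa_label n)"
    using assms qa_vertex_in_plane6[OF assms(1), of "Suc j"] qa_label_simps(1,2)[of "Suc j"]
      qa_label_simps(2)[of j]
    by (auto split: if_splits)
  ultimately show ?thesis
    unfolding qa_edge_def plane6_def by (simp add: closed_segment_subset)
qed

text \<open>A vertex of the approximation shared by two consecutive edges of the hexagon is their
common vertex \<open>v\<^sub>i\<^sub>+\<^sub>1\<close>; it can be neither \<open>a\<^sub>i\<close> (which is nearer to \<open>v\<^sub>i\<close> than \<open>b\<^sub>i\<close>) nor \<open>b\<^sub>i\<^sub>+\<^sub>1\<close>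
(which is farther from \<open>v\<^sub>i\<^sub>+\<^sub>1\<close> than \<open>a\<^sub>i\<^sub>+\<^sub>1\<close>), so it is \<open>b\<^sub>i = a\<^sub>i\<^sub>+\<^sub>1\<close>, labelled \<open>i + 1\<close> twice.\<close>
lemma qa_label_eq_if_qa_vertex_eq_next:
  assumes hk: "hexagonal_knot v" and on: "qa_points_on_edges v a b"
    and near: "\<forall>i<6. dist (v i) (a i) < dist (v i) (b i)"
    and eq: "qa_vertex a b m = qa_vertex a b m'"
    and next_edge: "m' mod 12 div 2 = Suc (m mod 12 div 2) mod 6"
  shows "qa_label m = qa_label m'"
proof -
  define i where "i = m mod 12 div 2"
  define i' where "i' = m' mod 12 div 2"
  have i: "i < 6" "i' < 6" and i': "i' = Suc i mod 6"
    using next_edge by (simp_all add: i_def i'_def)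
  have vm: "qa_vertex a b m = (if even (m mod 12) then a i else b i)"
   and vm': "qa_vertex a b m' = (if even (m' mod 12) then a i' else b i')"
    by (simp_all add: qa_vertex_def i_def i'_def)
  have "qa_vertex a b m \<in> edge6 v i" "qa_vertex a b m \<in> edge6 v (Suc i)"
    using qa_vertex_in_edge6[OF on, of m] qa_vertex_in_edge6[OF on, of m'] eq i' edge6_Suc_mod
    by (simp_all add: i_def i'_def)
  moreover have "edge6 v i \<inter> edge6 v (Suc i) = {v i'}"
    using hk i i' unfolding hexagonal_knot_def by blast
  ultimately have at_vertex: "qa_vertex a b m = v i'" by blast
  have "odd (m mod 12)"
  proof
    assume "even (m mod 12)"
    then have "a i = v i'" using vm at_vertex by simp
    moreover have "b i \<in> closed_segment (v i) (v i')"
      using on i i' unfolding qa_points_on_edges_def edge6_def by simp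
    ultimately have "dist (v i) (b i) \<le> dist (v i) (a i)"
      using dist_in_closed_segment by (metis dist_commute)
    then show False using near i by fastforce
  qed
  moreover have "even (m' mod 12)"
  proof (rule ccontr)
    assume "odd (m' mod 12)"
    then have "b i' = v i'" using vm' at_vertex eq by simp
    then show False using near i by fastforce
  qed
  ultimately show ?thesis
    using qa_label_simps(1)[of m] qa_label_simps(1)[of m'] i i' by (simp add: i_def i'_def)
qed

lemma qa_label_eq_if_qa_vertex_eq:
  assumes hk: "hexagonal_knot v" and on: "qa_points_on_edges v a b"
    and near: "\<forall>i<6. dist (v i) (a i) < dist (v i) (b i)"
    and eq: "qa_vertex a b m = qa_vertex a b m'"
  shows "qa_label m = qa_label m'"
proof -
  define i where "i = m mod 12 div 2"
  define i' where "i' = m' mod 12 div 2"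
  have i: "i < 6" "i' < 6" by (simp_all add: i_def i'_def)
  consider "i = i'" | "i' = Suc i mod 6" | "i = Suc i' mod 6"
    | "i \<noteq> i'" "i' \<noteq> Suc i mod 6" "i \<noteq> Suc i' mod 6" by blast
  then show ?thesis
  proof cases
    case 1
    have "a i \<noteq> b i" using near i by fastforce
    then have "even (m mod 12) = even (m' mod 12)"
      using eq 1 by (auto simp: qa_vertex_def i_def i'_def split: if_splits)
    then have "m mod 12 = m' mod 12"
      using 1 unfolding i_def i'_def
      by (metis div_mult_mod_eq even_iff_mod_2_eq_zero odd_iff_mod_2_eq_one)
    then show ?thesis by (simp add: qa_label_def)
  next
    case 2
    then show ?thesis
      using qa_label_eq_if_qa_vertex_eq_next[OF hk on near eq] by (simp add: i_def i'_def)
  next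
    case 3
    then show ?thesis
      using qa_label_eq_if_qa_vertex_eq_next[OF hk on near eq[symmetric]] by (simp add: i_def i'_def)
  next
    case 4
    then have "edge6 v i \<inter> edge6 v i' = {}"
      using hk i unfolding hexagonal_knot_def by blast
    then show ?thesis
      using qa_vertex_in_edge6[OF on, of m] qa_vertex_in_edge6[OF on, of m'] eq
      by (auto simp: i_def i'_def)
  qed
qed

lemma qa_adjacent_edges_coplanar:
  assumes hk: "hexagonal_knot v" and on: "qa_points_on_edges v a b"
    and near: "\<forall>i<6. dist (v i) (a i) < dist (v i) (b i)"
    and adj: "qa_adjacent a b j j'"
  shows "\<exists>s<6. qa_edge a b j \<subseteq> plane6 v s \<and> qa_edge a b j' \<subseteq> plane6 v s"
proof -
  obtain n n' where n: "n \<in> {j, Suc j}" and n': "n' \<in> {j', Suc j'}"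
    and eq: "qa_vertex a b n = qa_vertex a b n'"
    using adj unfolding qa_adjacent_def by blast
  have "qa_label n = qa_label n'"
    using qa_label_eq_if_qa_vertex_eq[OF hk on near eq] .
  then show ?thesis
    using qa_edge_subset_plane6[OF on n] qa_edge_subset_plane6[OF on n']
    by (metis qa_label_def mod_less_divisor zero_less_numeral)
qed

lemma qa_type_adjacent_points:
  assumes "qa_type k a b L" "k \<noteq> 0"
  obtains j j' x y where "qa_adjacent a b j j'" "x \<noteq> y"
    "x \<in> L \<inter> qa_edge a b j" "y \<in> L \<inter> qa_edge a b j'"
proof -
  obtain J p where p: "inj_on p J" "\<forall>j\<in>J. p j \<in> L \<inter> qa_edge a b j"
    and card: "card {{j, j'} | j j'. j \<in> J \<and> j' \<in> J \<and> j \<noteq> j' \<and> qa_adjacent a b j j'} = k"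
    using assms(1) unfolding qa_type_def by blast
  then have "{{j, j'} | j j'. j \<in> J \<and> j' \<in> J \<and> j \<noteq> j' \<and> qa_adjacent a b j j'} \<noteq> {}"
    using assms(2) by force
  then obtain j j' where "j \<in> J" "j' \<in> J" "j \<noteq> j'" "qa_adjacent a b j j'"
    by blast
  with p show ?thesis using that by (metis inj_on_def)
qed

theorem lemma8:
  fixes v a b :: "nat \<Rightarrow> real^3" and L :: "(real^3) set"
  assumes "hexagonal_trefoil v"
    and "\<forall>i<6. marked_points (polygon6 v) \<inter> edge6 v i = {a i, b i} \<and> a i \<noteq> b i \<and>
               dist (v i) (a i) < dist (v i) (b i)"
    and "quadrisecant (qa_approx a b) L"
    and "\<not> quadrisecant (polygon6 v) L"
    and "qa_type 1 a b L \<or> qa_type 2 a b L"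
  shows "\<exists>i<6. L \<subseteq> plane6 v i"
proof -
  have hk: "hexagonal_knot v" using assms(1) by (simp add: hexagonal_trefoil_def)
  have on: "qa_points_on_edges v a b" and near: "\<forall>i<6. dist (v i) (a i) < dist (v i) (b i)"
    using assms(2) unfolding qa_points_on_edges_def by (metis Int_iff insertI1 insertI2)+
  obtain k where "qa_type k a b L" "k \<noteq> 0" using assms(5) by (metis one_neq_zero zero_neq_numeral)
  then obtain j j' x y where adj: "qa_adjacent a b j j'" and "x \<noteq> y"
    and xy: "x \<in> L \<inter> qa_edge a b j" "y \<in> L \<inter> qa_edge a b j'"
    by (rule qa_type_adjacent_points)
  obtain s where "s < 6" "qa_edge a b j \<subseteq> plane6 v s" "qa_edge a b j' \<subseteq> plane6 v s"
    using qa_adjacent_edges_coplanar[OF hk on near adj] by blast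
  moreover have "is_line L" using assms(3) by (simp add: quadrisecant_def)
  ultimately have "L \<subseteq> plane6 v s"
    using xy \<open>x \<noteq> y\<close> by (intro line_subset_affine[of L x y]) (auto simp: plane6_def)
  with \<open>s < 6\<close> show ?thesis by blast
qed

end
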